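(* Let $\phi$ be a uniformly convex N-function. Then the map $(\delta^-,\delta^+,t)\mapsto\phi'_{(\delta^-,\delta^+)}(t)$ is continuous on $[0,1]\times[1,\infty]\times[0,\infty)$. Furthermore, the map $(\delta^-,\delta^+,Q)\mapsto A_{(\delta^-,\delta^+)}(Q)$ is continuous on $[0,1]\times[1,\infty]\times\mathbb{R}^{n\times n}$, and the same holds with $A_{(\delta^-,\delta^+)}$ replaced by $A^{-1}_{(\delta^-,\delta^+)}$, $V_{(\delta^-,\delta^+)}$ or $V^{-1}_{(\delta^-,\delta^+)}$.
   Context: An N-function is a function $\phi:[0,\infty)\to[0,\infty)$ with right-continuous non-decreasing derivative $\phi'$, $\phi'(0)=0$, $\phi'(t)>0$ for $t>0$, $\phi'(t)\to\infty$, $\phi(t)=\int_0^t\phi'$. It is uniformly convex if $\phi\in C^1([0,\infty))\cap C^2((0,\infty))$ and $\inf_{t>0}\frac{\phi''(t)t}{\phi'(t)}+1>1$, $\sup_{t>0}\frac{\phi''(t)t}{\phi'(t)}+1<\infty$. For $0\le\delta^-\le\delta^+\le\infty$ the truncation is given by $\phi'_{(\delta^-,\delta^+)}(t):=\frac{\phi'(m)}{m}\,t$ with $m=\max(\delta^-,\min(t,\delta^+))$ (and value $0$ when $t=0$); $[1,\infty]$ carries the topology of the extended half-line. For $Q\in\mathbb{R}^{n\times n}$, $A_{(\delta^-,\delta^+)}(Q):=\phi'_{(\delta^-,\delta^+)}(|Q|)\frac{Q}{|Q|}$ and $V_{(\delta^-,\delta^+)}(Q):=\sqrt{\phi'_{(\delta^-,\delta^+)}(|Q|)|Q|}\,\frac{Q}{|Q|}$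 (both $0$ at $Q=0$), $|\cdot|$ the Frobenius norm; $A^{-1}_{(\delta^-,\delta^+)}$ and $V^{-1}_{(\delta^-,\delta^+)}$ denote the inverse maps of these bijections of $\mathbb{R}^{n\times n}$. *)

theory Defs
  imports "HOL-Analysis.Analysis"
begin

text \<open>An N-function \<open>phi\<close> together with its (right) derivative \<open>dphi\<close>.
  Only values on [0,\<infinity>) matter.\<close>
definition N_function :: "(real \<Rightarrow> real) \<Rightarrow> (real \<Rightarrow> real) \<Rightarrow> bool" where
  "N_function phi dphi \<longleftrightarrow>
     mono_on {0..} dphi \<and>
     (\<forall>t\<ge>0. continuous (at_right t) dphi) \<and>
     dphi 0 = 0 \<and>
     (\<forall>t>0. dphi t > 0) \<and>
     filterlim dphi at_top at_top \<and>
     (\<forall>t\<ge>0. phi t = integral {0..t} dphi)"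

text \<open>Uniform convexity: \<open>phi \<in> C^1([0,\<infinity>)) \<inter> C^2((0,\<infinity>))\<close> with
  \<open>inf_{t>0} phi''(t) t / phi'(t) + 1 > 1\<close> and \<open>sup_{t>0} phi''(t) t / phi'(t) + 1 < \<infinity>\<close>.\<close>
definition uniformly_convex_N_function :: "(real \<Rightarrow> real) \<Rightarrow> (real \<Rightarrow> real) \<Rightarrow> bool" where
  "uniformly_convex_N_function phi dphi \<longleftrightarrow>
     N_function phi dphi \<and>
     (\<forall>t\<ge>0. (phi has_real_derivative dphi t) (at t within {0..})) \<and>
     continuous_on {0..} dphi \<and>
     (\<forall>t>0. dphi differentiable (at t)) \<and>
     continuous_on {0<..} (deriv dphi) \<and>
     (\<exists>c>0. \<forall>t>0. c \<le> deriv dphi t * t / dphi t) \<and>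
     (\<exists>C. \<forall>t>0. deriv dphi t * t / dphi t \<le> C)"

definition trunc_dphi :: "(real \<Rightarrow> real) \<Rightarrow> real \<Rightarrow> ereal \<Rightarrow> real \<Rightarrow> real" where
  "trunc_dphi dphi dm dp t =
     (if t = 0 then 0
      else (let m = max dm (real_of_ereal (min (ereal t) dp)) in dphi m / m * t))"

definition A_trunc :: "(real \<Rightarrow> real) \<Rightarrow> real \<Rightarrow> ereal \<Rightarrow> real^'n^'n \<Rightarrow> real^'n^'n" where
  "A_trunc dphi dm dp Q =
     (if Q = 0 then 0 else (trunc_dphi dphi dm dp (norm Q) / norm Q) *\<^sub>R Q)"

definition V_trunc :: "(real \<Rightarrow> real) \<Rightarrow> real \<Rightarrow> ereal \<Rightarrow> real^'n^'n \<Rightarrow> real^'n^'n" where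
  "V_trunc dphi dm dp Q =
     (if Q = 0 then 0 else (sqrt (trunc_dphi dphi dm dp (norm Q) * norm Q) / norm Q) *\<^sub>R Q)"

definition A_trunc_inv :: "(real \<Rightarrow> real) \<Rightarrow> real \<Rightarrow> ereal \<Rightarrow> real^'n^'n \<Rightarrow> real^'n^'n" where
  "A_trunc_inv dphi dm dp = inv (A_trunc dphi dm dp)"

definition V_trunc_inv :: "(real \<Rightarrow> real) \<Rightarrow> real \<Rightarrow> ereal \<Rightarrow> real^'n^'n \<Rightarrow> real^'n^'n" where
  "V_trunc_inv dphi dm dp = inv (V_trunc dphi dm dp)"

end

theory Submission
  imports Defs
begin

text \<open>
  Both \<open>A\<^sub>\<delta>\<close> and \<open>V\<^sub>\<delta>\<close> are radial maps \<open>Q \<mapsto> r(\<delta>, |Q|) Q / |Q|\<close>, with profiles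
  \<open>r(\<delta>, t) = \<phi>'\<^sub>\<delta>(t)\<close> and \<open>r(\<delta>, t) = sqrt (\<phi>'\<^sub>\<delta>(t) t)\<close>. For each \<open>\<delta>\<close> such a profile is an
  increasing bijection of \<open>[0, \<infinity>)\<close>, and it is jointly continuous in \<open>(\<delta>, t)\<close>: monotonicity
  comes from \<open>\<phi>'' > 0\<close>, guaranteed by uniform convexity, and at the one degenerate point
  \<open>\<delta>\<^sup>- = t = 0\<close> of \<open>\<phi>'(m) t / m\<close> the factor \<open>t / m\<close> stays in \<open>[0, 1]\<close> while \<open>\<phi>'(m) \<rightarrow> 0\<close>.
  A radial map with such a profile is jointly continuous in \<open>(\<delta>, Q)\<close>, and its inverse is the
  radial map of the inverse profile, which is again jointly continuous: \<open>a < r\<^sup>-\<^sup>1(\<delta>\<^sub>0, s\<^sub>0) < b\<close>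
  means \<open>r(\<delta>\<^sub>0, a) < s\<^sub>0 < r(\<delta>\<^sub>0, b)\<close>, and these strict inequalities persist near \<open>(\<delta>\<^sub>0, s\<^sub>0)\<close>.
\<close>

section \<open>Radial maps\<close>

definition radial :: "('a \<Rightarrow> real \<Rightarrow> real) \<Rightarrow> 'a \<Rightarrow> 'b::real_normed_vector \<Rightarrow> 'b" where
  "radial r x Q = (if Q = 0 then 0 else (r x (norm Q) / norm Q) *\<^sub>R Q)"

lemma continuous_on_compose_case_prod:
  assumes "continuous_on (S \<times> U) (\<lambda>(x, t). r x t)"
    and "continuous_on T f" "continuous_on T g" "\<And>z. z \<in> T \<Longrightarrow> f z \<in> S \<and> g z \<in> U"
  shows "continuous_on T (\<lambda>z. r (f z) (g z))"
proof -
  have "continuous_on T (\<lambda>z. (f z, g z))"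
    using assms(2,3) by (rule continuous_on_Pair)
  moreover have "(\<lambda>z. (f z, g z)) ` T \<subseteq> S \<times> U"
    using assms(4) by auto
  ultimately show ?thesis
    using continuous_on_compose2[OF assms(1)] by force
qed

lemma continuous_on_prod_assoc:
  assumes "continuous_on ((A \<times> B) \<times> C) (\<lambda>((a, b), c). f a b c)"
  shows "continuous_on (A \<times> B \<times> C) (\<lambda>(a, b, c). f a b c)"
proof -
  have "continuous_on (A \<times> B \<times> C) (\<lambda>z. ((fst z, fst (snd z)), snd (snd z)))"
    by (intro continuous_intros)
  moreover have "(\<lambda>z. ((fst z, fst (snd z)), snd (snd z))) ` (A \<times> B \<times> C) \<subseteq> (A \<times> B) \<times> C"
    by auto
  ultimately show ?thesis
    using continuous_on_compose2[OF assms, of _ "\<lambda>z. ((fst z, fst (snd z)), snd (snd z))"]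
    by (simp add: split_beta)
qed

lemma continuous_on_radial:
  fixes r :: "'a::topological_space \<Rightarrow> real \<Rightarrow> real"
  assumes cont: "continuous_on (S \<times> {0..}) (\<lambda>(x, t). r x t)"
    and zero: "\<And>x. x \<in> S \<Longrightarrow> r x 0 = 0"
  shows "continuous_on (S \<times> UNIV) (\<lambda>(x, Q). radial r x (Q :: 'b::real_normed_vector))"
  unfolding continuous_on_def
proof (intro ballI)
  fix z :: "'a \<times> 'b"
  assume z: "z \<in> S \<times> UNIV"
  let ?F = "at z within S \<times> UNIV"
  have "continuous_on (S \<times> UNIV) (\<lambda>w. r (fst w) (norm (snd w :: 'b)))"
    by (rule continuous_on_compose_case_prod[OF cont continuous_on_fst continuous_on_norm[OF continuous_on_snd]])
      (auto intro: continuous_on_id)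
  then have r_lim: "((\<lambda>w. r (fst w) (norm (snd w))) \<longlongrightarrow> r (fst z) (norm (snd z))) ?F"
    using z unfolding continuous_on_def by blast
  show "((\<lambda>(x, Q). radial r x Q) \<longlongrightarrow> (case z of (x, Q) \<Rightarrow> radial r x Q)) ?F"
  proof (cases "snd z = 0")
    case True
    then have "((\<lambda>w. r (fst w) (norm (snd w))) \<longlongrightarrow> 0) ?F"
      using r_lim zero z by auto
    then have "((\<lambda>(x, Q). radial r x Q) \<longlongrightarrow> 0) ?F"
      by (rule tendsto_0_le[where K = 1]) (auto simp: radial_def split_beta)
    with True show ?thesis
      by (simp add: radial_def split_beta)
  next
    case False
    have "eventually (\<lambda>w. snd w \<noteq> 0) ?F"
      by (rule tendsto_imp_eventually_ne[OF _ False]) (intro tendsto_intros)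
    moreover have "((\<lambda>w. (r (fst w) (norm (snd w)) / norm (snd w)) *\<^sub>R snd w) \<longlongrightarrow>
        (r (fst z) (norm (snd z)) / norm (snd z)) *\<^sub>R snd z) ?F"
      using False r_lim by (intro tendsto_intros) (auto simp: split_beta)
    ultimately show ?thesis
      using False by (subst tendsto_cong) (auto elim!: eventually_mono simp: radial_def split_beta)
  qed
qed

lemma radial_radial:
  assumes "\<And>t. t > 0 \<Longrightarrow> g x t > 0" "\<And>t. t > 0 \<Longrightarrow> f x (g x t) = t"
  shows "radial f x (radial g x Q) = Q"
proof (cases "Q = 0")
  case False
  then have "g x (norm Q) > 0" "f x (g x (norm Q)) = norm Q"
    using assms by auto
  with False show ?thesis
    by (simp add: radial_def)
qed (simp add: radial_def)

section \<open>Increasing profiles and their inverses\<close>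

definition increasing_profile_on :: "'a::topological_space set \<Rightarrow> ('a \<Rightarrow> real \<Rightarrow> real) \<Rightarrow> bool" where
  "increasing_profile_on S r \<longleftrightarrow>
     continuous_on (S \<times> {0..}) (\<lambda>(x, t). r x t) \<and>
     (\<forall>x\<in>S. r x 0 = 0 \<and> strict_mono_on {0..} (r x) \<and> (\<forall>s\<ge>0. \<exists>t\<ge>0. s \<le> r x t))"

lemma increasing_profile_onD:
  assumes "increasing_profile_on S r" "x \<in> S"
  shows "r x 0 = 0"
    and "\<And>s t. 0 \<le> s \<Longrightarrow> s < t \<Longrightarrow> r x s < r x t"
    and "\<And>s t. 0 \<le> s \<Longrightarrow> s \<le> t \<Longrightarrow> r x s \<le> r x t"
    and "\<And>t. 0 \<le> t \<Longrightarrow> 0 \<le> r x t"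
    and "\<And>s. 0 \<le> s \<Longrightarrow> \<exists>t\<ge>0. s \<le> r x t"
    and "\<And>s t. 0 \<le> s \<Longrightarrow> 0 \<le> t \<Longrightarrow> r x s = r x t \<Longrightarrow> s = t"
proof -
  have mono: "strict_mono_on {0..} (r x)"
    using assms unfolding increasing_profile_on_def by blast
  show zero: "r x 0 = 0" "\<And>s. 0 \<le> s \<Longrightarrow> \<exists>t\<ge>0. s \<le> r x t"
    using assms unfolding increasing_profile_on_def by blast+
  show "\<And>s t. 0 \<le> s \<Longrightarrow> s < t \<Longrightarrow> r x s < r x t"
    using strict_mono_onD[OF mono] by simp
  show le: "\<And>s t. 0 \<le> s \<Longrightarrow> s \<le> t \<Longrightarrow> r x s \<le> r x t"
    using strict_mono_on_leD[OF mono] by simp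
  show "\<And>t. 0 \<le> t \<Longrightarrow> 0 \<le> r x t"
    using le[of 0] zero by simp
  show "\<And>s t. 0 \<le> s \<Longrightarrow> 0 \<le> t \<Longrightarrow> r x s = r x t \<Longrightarrow> s = t"
    using strict_mono_on_eqD[OF mono] by force
qed

lemma increasing_profile_on_continuous:
  assumes "increasing_profile_on S r" "continuous_on T f" "continuous_on T g"
    "\<And>z. z \<in> T \<Longrightarrow> f z \<in> S \<and> 0 \<le> g z"
  shows "continuous_on T (\<lambda>z. r (f z) (g z))"
  using continuous_on_compose_case_prod[of S "{0..}" r T f g] assms unfolding increasing_profile_on_def by blast

definition profile_inv :: "('a \<Rightarrow> real \<Rightarrow> real) \<Rightarrow> 'a \<Rightarrow> real \<Rightarrow> real" where
  "profile_inv r x s = (THE t. 0 \<le> t \<and> r x t = s)"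

lemma profile_inv:
  assumes r: "increasing_profile_on S r" and x: "x \<in> S" and s: "0 \<le> s"
  shows "0 \<le> profile_inv r x s" "r x (profile_inv r x s) = s"
proof -
  obtain T where T: "0 \<le> T" "s \<le> r x T"
    using increasing_profile_onD(5)[OF r x s] by blast
  have "continuous_on {0..T} (r x)"
    using increasing_profile_on_continuous[OF r continuous_on_const continuous_on_id, of "{0..T}" x] x by auto
  then obtain t where "0 \<le> t" "r x t = s"
    using IVT'[of "r x" 0 s T] T s increasing_profile_onD(1)[OF r x] by auto
  with increasing_profile_onD(6)[OF r x] have "\<exists>!t. 0 \<le> t \<and> r x t = s"
    by blast
  then have "0 \<le> profile_inv r x s \<and> r x (profile_inv r x s) = s"
    unfolding profile_inv_def by (rule theI')
  then show "0 \<le> profile_inv r x s" "r x (profile_inv r x s) = s"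
    by auto
qed

lemma profile_inv_apply:
  assumes r: "increasing_profile_on S r" and x: "x \<in> S" and t: "0 \<le> t"
  shows "profile_inv r x (r x t) = t"
  using profile_inv[OF r x increasing_profile_onD(4)[OF r x t]] t
    increasing_profile_onD(6)[OF r x] by blast

lemma profile_inv_less_iff:
  assumes r: "increasing_profile_on S r" and x: "x \<in> S" and s: "0 \<le> s" and a: "0 \<le> a"
  shows "a < profile_inv r x s \<longleftrightarrow> r x a < s"
    and "profile_inv r x s < a \<longleftrightarrow> s < r x a"
proof -
  have mono: "strict_mono_on {0..} (r x)"
    using r x unfolding increasing_profile_on_def by blast
  show "a < profile_inv r x s \<longleftrightarrow> r x a < s" "profile_inv r x s < a \<longleftrightarrow> s < r x a"
    using strict_mono_on_less[OF mono, of a "profile_inv r x s"]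
      strict_mono_on_less[OF mono, of "profile_inv r x s" a] profile_inv[OF r x s] a
    by auto
qed

lemma tendsto_profile_inv:
  fixes r :: "'a::topological_space \<Rightarrow> real \<Rightarrow> real"
  assumes r: "increasing_profile_on S r" and x0: "x0 \<in> S" and s0: "0 \<le> s0"
    and X: "(X \<longlongrightarrow> x0) F" and Y: "(Y \<longlongrightarrow> s0) F"
    and dom: "eventually (\<lambda>w. X w \<in> S \<and> 0 \<le> Y w) F"
  shows "((\<lambda>w. profile_inv r (X w) (Y w)) \<longlongrightarrow> profile_inv r x0 s0) F"
proof -
  have slice_lim: "((\<lambda>w. r (X w) a) \<longlongrightarrow> r x0 a) F" if "0 \<le> a" for a
  proof -
    have cont: "continuous_on (S \<times> {0..}) (\<lambda>(x, t). r x t)"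
      using r unfolding increasing_profile_on_def by blast
    have "((\<lambda>w. (\<lambda>(x, t). r x t) (X w, a)) \<longlongrightarrow> (\<lambda>(x, t). r x t) (x0, a)) F"
      by (rule continuous_on_tendsto_compose[OF cont tendsto_Pair[OF X tendsto_const]])
        (use x0 that in \<open>auto intro: eventually_mono[OF dom]\<close>)
    then show ?thesis
      by simp
  qed
  note inv_less_iff = profile_inv_less_iff[OF r]
  show ?thesis
  proof (rule order_tendstoI)
    fix a
    assume a: "a < profile_inv r x0 s0"
    show "eventually (\<lambda>w. a < profile_inv r (X w) (Y w)) F"
    proof (cases "a < 0")
      case True
      show ?thesis
        by (rule eventually_mono[OF dom]) (use True profile_inv[OF r] in force)
    next
      case False
      with a have "r x0 a < s0"
        using inv_less_iff(1)[OF x0 s0] by simp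
      then have "eventually (\<lambda>w. 0 < Y w - r (X w) a) F"
        using False by (intro order_tendstoD(1)[OF tendsto_diff[OF Y slice_lim]]) auto
      then show ?thesis
        by (rule eventually_mono[OF eventually_conj[OF dom]]) (use False inv_less_iff(1) in auto)
    qed
  next
    fix b
    assume b: "profile_inv r x0 s0 < b"
    moreover have "0 \<le> b"
      using b profile_inv[OF r x0 s0] by linarith
    ultimately have "s0 < r x0 b"
      using inv_less_iff(2)[OF x0 s0] by simp
    then have "eventually (\<lambda>w. 0 < r (X w) b - Y w) F"
      using \<open>0 \<le> b\<close> by (intro order_tendstoD(1)[OF tendsto_diff[OF slice_lim Y]]) auto
    then show "eventually (\<lambda>w. profile_inv r (X w) (Y w) < b) F"
      by (rule eventually_mono[OF eventually_conj[OF dom]]) (use \<open>0 \<le> b\<close> inv_less_iff(2) in auto)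
  qed
qed

lemma continuous_on_profile_inv:
  fixes r :: "'a::topological_space \<Rightarrow> real \<Rightarrow> real"
  assumes r: "increasing_profile_on S r"
  shows "continuous_on (S \<times> {0..}) (\<lambda>(x, s). profile_inv r x s)"
  unfolding continuous_on_def split_beta
  by (intro ballI tendsto_profile_inv[OF r])
    (auto intro!: tendsto_fst tendsto_snd always_eventually simp: eventually_at_filter)

lemma increasing_profile_on_profile_inv:
  fixes r :: "'a::topological_space \<Rightarrow> real \<Rightarrow> real"
  assumes r: "increasing_profile_on S r"
  shows "increasing_profile_on S (profile_inv r)"
  unfolding increasing_profile_on_def
proof (intro conjI ballI allI impI strict_mono_onI)
  show "continuous_on (S \<times> {0..}) (\<lambda>(x, s). profile_inv r x s)"
    by (rule continuous_on_profile_inv[OF r])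
next
  fix x
  assume x: "x \<in> S"
  show "profile_inv r x 0 = 0"
    using profile_inv_apply[OF r x, of 0] increasing_profile_onD(1)[OF r x] by simp
  show "profile_inv r x s < profile_inv r x t" if "s \<in> {0..}" "t \<in> {0..}" "s < t" for s t
    using that profile_inv_less_iff(2)[OF r x] profile_inv[OF r x] by auto
  show "\<exists>t\<ge>0. s \<le> profile_inv r x t" if "0 \<le> s" for s
    using that profile_inv_apply[OF r x that] increasing_profile_onD(4)[OF r x that]
    by (intro exI[of _ "r x s"]) auto
qed

lemma inv_radial:
  assumes r: "increasing_profile_on S r" and x: "x \<in> S"
  shows "inv (radial r x) = (radial (profile_inv r) x :: 'b::real_normed_vector \<Rightarrow> 'b)"
proof (rule inj_imp_inv_eq)
  have pos: "f x t > 0" if "increasing_profile_on S f" "t > 0" for f and t :: real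
    using increasing_profile_onD(2)[OF that(1) x, of 0 t] increasing_profile_onD(1)[OF that(1) x] that(2)
    by simp
  have "radial (profile_inv r) x (radial r x Q) = Q" for Q :: 'b
    by (rule radial_radial) (use pos[OF r] profile_inv_apply[OF r x] in auto)
  then show "inj (radial r x :: 'b \<Rightarrow> 'b)"
    by (metis injI)
  show "\<forall>Q::'b. radial r x (radial (profile_inv r) x Q) = Q"
    by (intro allI radial_radial)
      (use pos[OF increasing_profile_on_profile_inv[OF r]] profile_inv[OF r x] in auto)
qed

lemma increasing_profile_on_radial_continuous:
  assumes "increasing_profile_on (A \<times> B) p"
  shows "continuous_on (A \<times> B \<times> UNIV) (\<lambda>(a, b, Q). radial p (a, b) (Q :: 'c::real_normed_vector))"
proof -
  have "continuous_on ((A \<times> B) \<times> UNIV) (\<lambda>(x, Q). radial p x (Q :: 'c))"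
    using continuous_on_radial[of "A \<times> B" p] assms unfolding increasing_profile_on_def by blast
  then show ?thesis
    using continuous_on_prod_assoc[of A B UNIV "\<lambda>a b Q. radial p (a, b) Q"] by (simp add: split_beta)
qed

lemma increasing_profile_on_sqrt:
  assumes r: "increasing_profile_on S r"
  shows "increasing_profile_on S (\<lambda>x t. sqrt (r x t * t))"
  unfolding increasing_profile_on_def
proof (intro conjI ballI allI impI strict_mono_onI)
  show "continuous_on (S \<times> {0..}) (\<lambda>(x, t). sqrt (r x t * t))"
    using r unfolding increasing_profile_on_def split_beta
    by (intro continuous_on_real_sqrt continuous_on_mult continuous_on_snd continuous_on_id) simp_all
next
  fix x
  assume x: "x \<in> S"
  note r_x = increasing_profile_onD[OF r x]
  show "sqrt (r x 0 * 0) = 0"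
    by simp
  show "sqrt (r x s * s) < sqrt (r x t * t)" if "s \<in> {0..}" "t \<in> {0..}" "s < t" for s t
  proof -
    have "r x s * s \<le> r x s * t"
      using that r_x(4)[of s] by (intro mult_left_mono) auto
    also have "\<dots> < r x t * t"
      using that r_x(2)[of s t] by (intro mult_strict_right_mono) auto
    finally show ?thesis
      by simp
  qed
  show "\<exists>t\<ge>0. s \<le> sqrt (r x t * t)" if s: "0 \<le> s" for s
  proof -
    obtain t where t: "0 \<le> t" "s \<le> r x t"
      using r_x(5)[OF s] by blast
    define t' where "t' = max t s"
    have "s * s \<le> r x t' * t'"
      using s t r_x(3)[of t t'] by (intro mult_mono) (auto simp: t'_def)
    then have "s \<le> sqrt (r x t' * t')"
      using s real_sqrt_le_mono by fastforce
    then show ?thesis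
      using t by (intro exI[of _ t']) (auto simp: t'_def)
  qed
qed

section \<open>The truncated derivative\<close>

lemma uniformly_convex_N_function_strict_mono:
  assumes "uniformly_convex_N_function phi dphi"
  shows "strict_mono_on {0..} dphi"
proof (rule strict_mono_onI)
  have N: "N_function phi dphi"
    and diff: "\<And>t. t > 0 \<Longrightarrow> dphi differentiable (at t)"
    using assms unfolding uniformly_convex_N_function_def by auto
  obtain c where c: "c > 0" "\<And>t. t > 0 \<Longrightarrow> c \<le> deriv dphi t * t / dphi t"
    using assms unfolding uniformly_convex_N_function_def by auto
  have pos: "\<And>t. t > 0 \<Longrightarrow> dphi t > 0" and zero: "dphi 0 = 0"
    using N unfolding N_function_def by auto
  have deriv_pos: "deriv dphi t > 0" if "t > 0" for t
  proof -
    have "0 < deriv dphi t * t / dphi t"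
      using c(1) c(2)[OF that] by linarith
    then show ?thesis
      using that pos[OF that] by (simp add: zero_less_divide_iff zero_less_mult_iff)
  qed
  fix a b :: real
  assume "a \<in> {0..}" "b \<in> {0..}" "a < b"
  then consider "a = 0" | "0 < a" "a < b"
    by fastforce
  then show "dphi a < dphi b"
  proof cases
    case 1
    then show ?thesis
      using zero pos \<open>a < b\<close> by simp
  next
    case 2
    show ?thesis
    proof (rule DERIV_pos_imp_increasing[OF 2(2)])
      fix t
      assume "a \<le> t" "t \<le> b"
      with 2 have "t > 0"
        by simp
      then show "\<exists>y. DERIV dphi t :> y \<and> y > 0"
        using diff deriv_pos DERIV_deriv_iff_real_differentiable by blast
    qed
  qed
qed

definition trunc_clamp :: "real \<Rightarrow> ereal \<Rightarrow> real \<Rightarrow> real" where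
  "trunc_clamp dm dp t = max dm (real_of_ereal (min (ereal t) dp))"

text \<open>Since \<open>0 / 0 = 0\<close>, the separate case \<open>t = 0\<close> in \<open>trunc_dphi\<close> is subsumed.\<close>

lemma trunc_dphi_eq:
  "0 \<le> t \<Longrightarrow> trunc_dphi dphi dm dp t = dphi (trunc_clamp dm dp t) * (t / trunc_clamp dm dp t)"
  unfolding trunc_dphi_def trunc_clamp_def Let_def by (cases "t = 0") auto

lemma trunc_clamp_real_cutoff:
  assumes "1 \<le> dp"
  obtains D where "1 \<le> D" "\<And>u. u \<le> t \<Longrightarrow> trunc_clamp dm dp u = max dm (min u D)"
proof (cases dp)
  case (real d)
  then show ?thesis
    using assms that[of d] by (auto simp: trunc_clamp_def min_def)
next
  case PInf
  then show ?thesis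
    using that[of "max t 1"] by (auto simp: trunc_clamp_def min_def)
qed (use assms in simp)

lemma clamp_cross_le:
  fixes dm D s t :: real
  assumes "0 \<le> dm" "dm \<le> D" "0 < D" "0 \<le> s" "s \<le> t"
  shows "s * max dm (min t D) \<le> t * max dm (min s D)"
  using assms
  by (cases "s \<le> dm"; cases "s \<le> D"; cases "t \<le> dm"; cases "t \<le> D")
    (auto simp: max_def min_def mult.commute[of _ D] intro: mult_mono mult_right_mono mult_left_mono)

lemma clamped_profile_less:
  fixes f :: "real \<Rightarrow> real"
  assumes f: "strict_mono_on {0..} f" "f 0 = 0"
    and D: "0 \<le> dm" "dm \<le> D" "0 < D" and st: "0 \<le> s" "s < t"
  shows "f (max dm (min s D)) * (s / max dm (min s D)) < f (max dm (min t D)) * (t / max dm (min t D))"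
proof -
  define a where "a = max dm (min s D)"
  define b where "b = max dm (min t D)"
  have a: "0 \<le> a" "a \<le> b" and b: "0 < b"
    using D st by (auto simp: a_def b_def)
  have fa: "0 \<le> f a" and fb: "0 < f b"
    using strict_mono_on_leD[OF f(1), of 0 a] strict_mono_onD[OF f(1), of 0 b] f(2) a b by auto
  have quot: "s / a \<le> t / b"
  proof (cases "a = 0")
    case False
    then show ?thesis
      using clamp_cross_le[OF D st(1) less_imp_le[OF st(2)]] a b
      by (simp add: a_def b_def divide_simps mult.commute)
  qed (use st b in simp)
  show ?thesis
    unfolding a_def[symmetric] b_def[symmetric]
  proof (cases "a < b")
    case True
    have "f a * (s / a) \<le> f a * (t / b)"
      by (rule mult_left_mono[OF quot fa])
    also have "\<dots> < f b * (t / b)"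
      using strict_mono_onD[OF f(1), of a b] True a b st by (intro mult_strict_right_mono) auto
    finally show "f a * (s / a) < f b * (t / b)" .
  next
    case False
    with a have "a = b"
      by simp
    then show "f a * (s / a) < f b * (t / b)"
      using b fb st by (simp add: divide_strict_right_mono)
  qed
qed

lemma trunc_dphi_strict_mono:
  assumes dphi: "strict_mono_on {0..} dphi" "dphi 0 = 0"
    and dm: "0 \<le> dm" "dm \<le> 1" and dp: "1 \<le> dp"
  shows "strict_mono_on {0..} (trunc_dphi dphi dm dp)"
proof (rule strict_mono_onI)
  fix s t :: real
  assume "s \<in> {0..}" "t \<in> {0..}" "s < t"
  moreover obtain D where "1 \<le> D" "\<And>u. u \<le> t \<Longrightarrow> trunc_clamp dm dp u = max dm (min u D)"
    using trunc_clamp_real_cutoff[OF dp] by blast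
  ultimately show "trunc_dphi dphi dm dp s < trunc_dphi dphi dm dp t"
    using clamped_profile_less[OF dphi dm(1), of D s t] dm by (simp add: trunc_dphi_eq)
qed

lemma trunc_dphi_unbounded:
  assumes dphi: "strict_mono_on {0..} dphi" "dphi 0 = 0" "filterlim dphi at_top at_top"
    and dm: "0 \<le> dm" "dm \<le> 1" and dp: "1 \<le> dp" and s: "0 \<le> s"
  shows "\<exists>t\<ge>0. s \<le> trunc_dphi dphi dm dp t"
proof (cases dp)
  case (real d)
  with dp have d: "1 \<le> d"
    by simp
  have "0 < dphi d"
    using strict_mono_onD[OF dphi(1), of 0 d] dphi(2) d by simp
  define t where "t = max d (s * d / dphi d)"
  have "trunc_clamp dm dp t = d"
    using real d dm by (auto simp: trunc_clamp_def t_def min_def)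
  have "s = dphi d * ((s * d / dphi d) / d)"
    using \<open>0 < dphi d\<close> d by simp
  also have "\<dots> \<le> dphi d * (t / d)"
    using \<open>0 < dphi d\<close> d by (intro mult_left_mono divide_right_mono) (auto simp: t_def)
  also have "\<dots> = trunc_dphi dphi dm dp t"
    using \<open>trunc_clamp dm dp t = d\<close> d by (simp add: trunc_dphi_eq t_def)
  finally show ?thesis
    using d by (intro exI[of _ t]) (auto simp: t_def)
next
  case PInf
  obtain N where N: "\<And>n. N \<le> n \<Longrightarrow> s \<le> dphi n"
    using dphi(3) unfolding filterlim_at_top eventually_at_top_linorder by blast
  define t where "t = max N 1"
  have "trunc_clamp dm dp t = t"
    using PInf dm by (auto simp: trunc_clamp_def t_def max_def)
  then have "trunc_dphi dphi dm dp t = dphi t"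
    by (simp add: trunc_dphi_eq t_def)
  then show ?thesis
    using N[of t] by (intro exI[of _ t]) (auto simp: t_def)
qed (use dp in simp)

lemma trunc_clamp_ge: "0 \<le> t \<Longrightarrow> 1 \<le> dp \<Longrightarrow> min t 1 \<le> trunc_clamp dm dp t"
  by (cases dp) (auto simp: trunc_clamp_def min_def)

lemma continuous_on_trunc_clamp:
  "continuous_on (({0..1} \<times> {1..}) \<times> {0..}) (\<lambda>((dm, dp), t). trunc_clamp dm dp t)"
proof -
  let ?D = "({0..1::real} \<times> {1::ereal..}) \<times> {0::real..}"
  have "continuous_on ?D (\<lambda>z. min (ereal (snd z)) (snd (fst z)))"
    by (intro continuous_intros)
  moreover have "\<bar>min (ereal (snd z)) (snd (fst z))\<bar> \<noteq> \<infinity>" if "z \<in> ?D" for z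
    using that by (cases "snd (fst z)") (auto simp: min_def)
  ultimately have "continuous_on ?D (\<lambda>z. real_of_ereal (min (ereal (snd z)) (snd (fst z))))"
    using continuous_on_iff_real[of ?D "\<lambda>z. min (ereal (snd z)) (snd (fst z))"] by (simp add: comp_def)
  then show ?thesis
    unfolding trunc_clamp_def split_beta by (intro continuous_intros)
qed

lemma continuous_on_mult_quotient:
  fixes f :: "real \<Rightarrow> real"
  assumes f: "continuous_on {0..} f" "f 0 = 0"
  shows "continuous_on {(m, t). 0 \<le> t \<and> min t 1 \<le> m} (\<lambda>(m, t). f m * (t / m))"
  unfolding continuous_on_def
proof (intro ballI)
  let ?D = "{(m, t). 0 \<le> t \<and> min t 1 \<le> m}"
  fix z0 :: "real \<times> real"
  assume z0: "z0 \<in> ?D"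
  let ?F = "at z0 within ?D"
  have dom: "eventually (\<lambda>z. z \<in> ?D) ?F"
    by (simp add: eventually_at_filter always_eventually)
  have m_nonneg: "0 \<le> fst z" if "z \<in> ?D" for z :: "real \<times> real"
    using that by (auto simp: min_def split: if_splits)
  have f_lim: "((\<lambda>z. f (fst z)) \<longlongrightarrow> f (fst z0)) ?F"
    by (rule continuous_on_tendsto_compose[OF f(1) tendsto_fst[OF tendsto_ident_at]])
      (use m_nonneg[OF z0] eventually_mono[OF dom m_nonneg] in simp_all)
  have "((\<lambda>z. f (fst z) * (snd z / fst z)) \<longlongrightarrow> f (fst z0) * (snd z0 / fst z0)) ?F"
  proof (cases "fst z0 = 0")
    case False
    then show ?thesis
      by (intro tendsto_intros f_lim) auto
  next
    case True
    with z0 have "snd z0 = 0"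
      by (auto simp: min_def split: if_splits)
    then have "eventually (\<lambda>z. z \<in> ?D \<and> snd z < 1) ?F"
      using dom order_tendstoD(2)[OF tendsto_snd[OF tendsto_ident_at[of z0 ?D]], of 1]
      by (auto intro: eventually_conj)
    then have "eventually (\<lambda>z. norm (f (fst z) * (snd z / fst z)) \<le> norm (f (fst z)) * 1) ?F"
    proof (rule eventually_mono)
      fix z :: "real \<times> real"
      assume "z \<in> ?D \<and> snd z < 1"
      then have "\<bar>snd z / fst z\<bar> \<le> 1"
        by (cases "fst z = 0") (auto simp: divide_le_eq_1 min_def split: if_splits)
      then show "norm (f (fst z) * (snd z / fst z)) \<le> norm (f (fst z)) * 1"
        unfolding real_norm_def abs_mult by (rule mult_left_mono) simp
    qed
    moreover have "((\<lambda>z. f (fst z)) \<longlongrightarrow> 0) ?F"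
      using f_lim True f(2) by simp
    ultimately have "((\<lambda>z. f (fst z) * (snd z / fst z)) \<longlongrightarrow> 0) ?F"
      by (rule tendsto_0_le[rotated])
    then show ?thesis
      using True f(2) by simp
  qed
  then show "((\<lambda>(m, t). f m * (t / m)) \<longlongrightarrow> (case z0 of (m, t) \<Rightarrow> f m * (t / m))) ?F"
    by (simp add: case_prod_unfold)
qed

lemma continuous_on_trunc_dphi:
  assumes dphi: "continuous_on {0..} dphi" "dphi 0 = 0"
  shows "continuous_on (({0..1} \<times> {1..}) \<times> {0..}) (\<lambda>((dm, dp), t). trunc_dphi dphi dm dp t)"
proof -
  let ?D = "({0..1::real} \<times> {1::ereal..}) \<times> {0::real..}"
  define M where "M z = trunc_clamp (fst (fst z)) (snd (fst z)) (snd z)" for z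
  have "continuous_on ?D (\<lambda>z. (M z, snd z))"
    using continuous_on_trunc_clamp unfolding M_def split_beta by (intro continuous_intros)
  moreover have "(\<lambda>z. (M z, snd z)) ` ?D \<subseteq> {(m, t). 0 \<le> t \<and> min t 1 \<le> m}"
    using trunc_clamp_ge by (auto simp: M_def)
  ultimately have "continuous_on ?D (\<lambda>z. dphi (M z) * (snd z / M z))"
    using continuous_on_compose2[OF continuous_on_mult_quotient[OF dphi], of ?D "\<lambda>z. (M z, snd z)"]
    by simp
  then show ?thesis
    by (rule continuous_on_eq) (auto simp: trunc_dphi_eq M_def)
qed

lemma increasing_profile_on_trunc_dphi:
  assumes "uniformly_convex_N_function phi dphi"
  shows "increasing_profile_on ({0..1} \<times> {1..}) (\<lambda>(dm, dp). trunc_dphi dphi dm dp)"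
proof -
  have cont: "continuous_on {0..} dphi" and zero: "dphi 0 = 0"
    and at_top: "filterlim dphi at_top at_top"
    using assms unfolding uniformly_convex_N_function_def N_function_def by auto
  note mono = uniformly_convex_N_function_strict_mono[OF assms]
  show ?thesis
    unfolding increasing_profile_on_def
    using continuous_on_trunc_dphi[OF cont zero] trunc_dphi_strict_mono[OF mono zero]
      trunc_dphi_unbounded[OF mono zero at_top]
    by (auto simp: split_beta trunc_dphi_def)
qed

theorem lemmaA9:
  fixes phi dphi :: "real \<Rightarrow> real"
  assumes "uniformly_convex_N_function phi dphi"
  shows "(continuous_on ({0..1} \<times> {1..} \<times> {0..})
           (\<lambda>(dm, dp, t). trunc_dphi dphi dm dp t)) \<and>
         (continuous_on ({0..1} \<times> {1..} \<times> UNIV)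
           (\<lambda>(dm, dp, Q::real^'n^'n). A_trunc dphi dm dp Q)) \<and>
         (continuous_on ({0..1} \<times> {1..} \<times> UNIV)
           (\<lambda>(dm, dp, Q::real^'n^'n). A_trunc_inv dphi dm dp Q)) \<and>
         (continuous_on ({0..1} \<times> {1..} \<times> UNIV)
           (\<lambda>(dm, dp, Q::real^'n^'n). V_trunc dphi dm dp Q)) \<and>
         (continuous_on ({0..1} \<times> {1..} \<times> UNIV)
           (\<lambda>(dm, dp, Q::real^'n^'n). V_trunc_inv dphi dm dp Q))"
proof -
  let ?S = "{0..1::real} \<times> {1::ereal..}"
  define r where "r = (\<lambda>(dm, dp). trunc_dphi dphi dm dp)"
  define v where "v x t = sqrt (r x t * t)" for x t
  have r: "increasing_profile_on ?S r"
    unfolding r_def by (rule increasing_profile_on_trunc_dphi[OF assms])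
  have v: "increasing_profile_on ?S v"
    unfolding v_def by (rule increasing_profile_on_sqrt[OF r])
  have A: "A_trunc dphi dm dp = radial r (dm, dp)" and V: "V_trunc dphi dm dp = radial v (dm, dp)"
    for dm dp
    by (simp_all add: fun_eq_iff A_trunc_def V_trunc_def radial_def r_def v_def)
  show ?thesis
  proof (intro conjI)
    show "continuous_on ({0..1} \<times> {1..} \<times> {0..}) (\<lambda>(dm, dp, t). trunc_dphi dphi dm dp t)"
      using assms unfolding uniformly_convex_N_function_def N_function_def
      by (intro continuous_on_prod_assoc continuous_on_trunc_dphi) auto
    show "continuous_on ({0..1} \<times> {1..} \<times> UNIV) (\<lambda>(dm, dp, Q::real^'n^'n). A_trunc dphi dm dp Q)"
      using increasing_profile_on_radial_continuous[OF r] by (simp add: A)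
    show "continuous_on ({0..1} \<times> {1..} \<times> UNIV) (\<lambda>(dm, dp, Q::real^'n^'n). V_trunc dphi dm dp Q)"
      using increasing_profile_on_radial_continuous[OF v] by (simp add: V)
    show "continuous_on ({0..1} \<times> {1..} \<times> UNIV) (\<lambda>(dm, dp, Q::real^'n^'n). A_trunc_inv dphi dm dp Q)"
      using increasing_profile_on_radial_continuous[OF increasing_profile_on_profile_inv[OF r]]
      by (rule continuous_on_eq) (auto simp: A_trunc_inv_def A inv_radial[OF r])
    show "continuous_on ({0..1} \<times> {1..} \<times> UNIV) (\<lambda>(dm, dp, Q::real^'n^'n). V_trunc_inv dphi dm dp Q)"
      using increasing_profile_on_radial_continuous[OF increasing_profile_on_profile_inv[OF v]]
      by (rule continuous_on_eq) (auto simp: V_trunc_inv_def V inv_radial[OF v])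
  qed
qed

end
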